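(* Let $t_0=\inf\{x:G([0,x])>0\}$. Then $\lim_{v\to\infty}\big(\Lambda(v)-v-t_0\big)=0$. If moreover $G(\{t_0\})>0$, then $\Lambda(v)=v+t_0$ for all $v\ge(1-G(\{t_0\}))/G(\{t_0\})$.
   Context: Model: Let $G$ be a probability measure on $[0,\infty)$. In $\mathbb Z^2$, every vertical edge has weight $1$ and every horizontal edge an independent random weight with law $G$; the passage time of a nearest-neighbour path is the sum of its edge weights; $T(u,w)$ is the infimum over paths from $u$ to $w$. For $v\ge0$, $\Lambda(v)=\lim_n\frac1nT((0,0),(n,\lceil vn\rceil))$ (a.s. limit, deterministic). *)

theory Defs
  imports "HOL-Probability.Probability"
begin

type_synonym vert = "int \<times> int"

text \<open>Environment: \<omega> (x,y) is the weight of the horizontal edge between (x,y) and (x+1,y).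
  Vertical edges have weight 1.\<close>

definition adj :: "vert \<Rightarrow> vert \<Rightarrow> bool" where
  "adj a b \<longleftrightarrow> \<bar>fst a - fst b\<bar> + \<bar>snd a - snd b\<bar> = 1"

definition edge_wt :: "(vert \<Rightarrow> real) \<Rightarrow> vert \<Rightarrow> vert \<Rightarrow> real" where
  "edge_wt \<omega> a b = (if snd a = snd b then \<omega> (min (fst a) (fst b), snd a) else 1)"

fun path_time :: "(vert \<Rightarrow> real) \<Rightarrow> vert list \<Rightarrow> real" where
  "path_time \<omega> [] = 0"
| "path_time \<omega> [a] = 0"
| "path_time \<omega> (a # b # rest) = edge_wt \<omega> a b + path_time \<omega> (b # rest)"

definition is_path :: "vert \<Rightarrow> vert \<Rightarrow> vert list \<Rightarrow> bool" where
  "is_path u w p \<longleftrightarrow> p \<noteq> [] \<and> hd p = u \<and> last p = w \<and>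
     (\<forall>i. Suc i < length p \<longrightarrow> adj (p ! i) (p ! Suc i))"

definition passage_time :: "(vert \<Rightarrow> real) \<Rightarrow> vert \<Rightarrow> vert \<Rightarrow> real" where
  "passage_time \<omega> u w = Inf {path_time \<omega> p | p. is_path u w p}"

definition env :: "real measure \<Rightarrow> (vert \<Rightarrow> real) measure" where
  "env G = PiM UNIV (\<lambda>_. G)"

end

theory Submission
  imports Defs
begin

(*
  A path from (0,0) to (n,m) with m >= 0 uses at least n horizontal and m vertical edges, and almost
  surely every horizontal weight is at least t0; hence Lambda(v) >= t0 + v.

  For the converse fix s with q = G[0,s] > 0 and follow the greedy path: in each column climb to the
  first horizontal edge of weight at most s and cross it. The climbs are geometric with mean
  (1-q)/q, and the height reached before column x depends only on the columns to the left of x, so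
  after n columns the height R_n has mean at most n (1-q)/q. By Markov's inequality R_n < c n has
  probability bounded away from 0 when c > (1-q)/q, so for some environment in the almost sure set it
  happens for infinitely many n. Finishing with a vertical segment to (n, ceil(v n)) costs at most
  n s + ceil(v n) + 2 n max(0, c - v), so Lambda(v) <= s + v whenever v >= (1-q)/q. Letting s decrease
  to t0 gives the limit; if G{t0} > 0 one may take s = t0.
*)

section \<open>Passage times of explicit paths\<close>

lemma path_time_snoc:
  "p \<noteq> [] \<Longrightarrow> path_time \<omega> (p @ [z]) = path_time \<omega> p + edge_wt \<omega> (last p) z"
  by (induction \<omega> p rule: path_time.induct) auto

lemma is_path_snoc:
  assumes "is_path u w p" "adj w z"
  shows "is_path u z (p @ [z])"
  unfolding is_path_def
proof (intro conjI allI impI)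
  show "hd (p @ [z]) = u" using assms(1) by (auto simp: is_path_def)
  fix i assume i: "Suc i < length (p @ [z])"
  show "adj ((p @ [z]) ! i) ((p @ [z]) ! Suc i)"
  proof (cases "Suc i < length p")
    case True
    then show ?thesis using assms(1) by (auto simp: is_path_def nth_append)
  next
    case False
    then have "i = length p - 1" "p \<noteq> []" using i assms(1) by (auto simp: is_path_def)
    then show ?thesis using assms by (auto simp: is_path_def nth_append last_conv_nth)
  qed
qed simp_all

definition reach_within :: "(vert \<Rightarrow> real) \<Rightarrow> vert \<Rightarrow> vert \<Rightarrow> real \<Rightarrow> bool" where
  "reach_within \<omega> u w c \<longleftrightarrow> (\<exists>p. is_path u w p \<and> path_time \<omega> p \<le> c)"

lemma reach_within_refl: "reach_within \<omega> u u 0"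
  unfolding reach_within_def by (rule exI[of _ "[u]"]) (auto simp: is_path_def)

lemma reach_within_mono: "reach_within \<omega> u w c \<Longrightarrow> c \<le> c' \<Longrightarrow> reach_within \<omega> u w c'"
  unfolding reach_within_def by force

lemma reach_within_step:
  assumes "reach_within \<omega> u w c" "adj w z"
  shows "reach_within \<omega> u z (c + edge_wt \<omega> w z)"
proof -
  obtain p where p: "is_path u w p" "path_time \<omega> p \<le> c"
    using assms(1) by (auto simp: reach_within_def)
  then have "p \<noteq> []" "last p = w" by (auto simp: is_path_def)
  with p assms(2) show ?thesis
    unfolding reach_within_def
    by (intro exI[of _ "p @ [z]"]) (auto simp: is_path_snoc path_time_snoc)
qed

lemma reach_within_right:
  "reach_within \<omega> u (x, y) c \<Longrightarrow> reach_within \<omega> u (x + 1, y) (c + \<omega> (x, y))"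
  using reach_within_step[of \<omega> u "(x, y)" c "(x + 1, y)"] by (simp add: adj_def edge_wt_def)

lemma reach_within_vertical_steps:
  assumes "\<bar>d\<bar> = 1" "reach_within \<omega> u (x, a) c"
  shows "reach_within \<omega> u (x, a + d * int k) (c + real k)"
proof (induction k)
  case 0
  show ?case using assms(2) by simp
next
  case (Suc k)
  have "adj (x, a + d * int k) (x, a + d * int (Suc k))"
    using assms(1) by (simp add: adj_def algebra_simps)
  moreover have "edge_wt \<omega> (x, a + d * int k) (x, a + d * int (Suc k)) = 1"
    using assms(1) by (auto simp: edge_wt_def algebra_simps)
  ultimately show ?case
    using reach_within_step[OF Suc.IH] by (metis add.assoc add.commute of_nat_Suc)
qed

lemma reach_within_vertical:
  assumes "reach_within \<omega> u (x, a) c"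
  shows "reach_within \<omega> u (x, b) (c + \<bar>b - a\<bar>)"
proof -
  define d :: int where "d = (if a \<le> b then 1 else -1)"
  have "b = a + d * int (nat \<bar>b - a\<bar>)" "real (nat \<bar>b - a\<bar>) = \<bar>b - a\<bar>"
    by (auto simp: d_def)
  with reach_within_vertical_steps[OF _ assms, of d "nat \<bar>b - a\<bar>"] show ?thesis
    by (simp add: d_def)
qed

lemma reach_within_column: "\<exists>c. reach_within \<omega> (0, 0) (int n, b) c"
proof -
  have "\<exists>c. reach_within \<omega> (0, 0) (int n, 0) c"
  proof (induction n)
    case 0
    show ?case by (metis of_nat_0 reach_within_refl)
  next
    case (Suc n)
    then show ?case using reach_within_right[of \<omega> "(0, 0)" "int n" 0] by (auto simp: add.commute)
  qed
  then show ?thesis using reach_within_vertical by blast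
qed

lemma path_time_nonneg: "(\<And>i. \<omega> i \<ge> 0) \<Longrightarrow> path_time \<omega> p \<ge> 0"
  by (induction \<omega> p rule: path_time.induct) (auto simp: edge_wt_def)

lemma passage_time_le:
  assumes "\<And>i. \<omega> i \<ge> 0" "reach_within \<omega> u w c"
  shows "passage_time \<omega> u w \<le> c"
proof -
  obtain p where p: "is_path u w p" "path_time \<omega> p \<le> c"
    using assms(2) by (auto simp: reach_within_def)
  have "bdd_below {path_time \<omega> p |p. is_path u w p}"
    unfolding bdd_below_def using path_time_nonneg[of \<omega>, OF assms(1)] by auto
  then have "passage_time \<omega> u w \<le> path_time \<omega> p"
    unfolding passage_time_def using p(1) by (auto intro: cInf_lower)
  with p(2) show ?thesis by simp
qed

lemma path_time_ge_displacement:
  assumes "t \<ge> 0" "\<And>i. \<omega> i \<ge> t" "p \<noteq> []" "\<forall>i. Suc i < length p \<longrightarrow> adj (p ! i) (p ! Suc i)"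
  shows "path_time \<omega> p \<ge> t * \<bar>fst (last p) - fst (hd p)\<bar> + \<bar>snd (last p) - snd (hd p)\<bar>"
  using assms(2-4)
proof (induction \<omega> p rule: path_time.induct)
  case (3 \<omega> a b rest)
  let ?l = "last (b # rest)"
  have "adj a b" using "3.prems"(3) by (auto dest: spec[of _ 0])
  then have edge: "edge_wt \<omega> a b \<ge> t * \<bar>fst b - fst a\<bar> + \<bar>snd b - snd a\<bar>"
  proof (cases "snd a = snd b")
    case True
    with \<open>adj a b\<close> have "\<bar>fst b - fst a\<bar> = 1" by (simp add: adj_def abs_minus_commute)
    with True show ?thesis using "3.prems"(1)[of "(min (fst a) (fst b), snd a)"] by (auto simp: edge_wt_def)
  next
    case False
    with \<open>adj a b\<close> have "\<bar>snd b - snd a\<bar> = 1" "fst a = fst b"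
      by (auto simp: adj_def abs_minus_commute)
    with False show ?thesis by (simp add: edge_wt_def)
  qed
  have "path_time \<omega> (b # rest) \<ge> t * \<bar>fst ?l - fst b\<bar> + \<bar>snd ?l - snd b\<bar>"
  proof -
    have "\<forall>i. Suc i < length (b # rest) \<longrightarrow> adj ((b # rest) ! i) ((b # rest) ! Suc i)"
      using "3.prems"(3) by (metis Suc_less_eq length_Cons nth_Cons_Suc)
    then show ?thesis using "3.IH"[OF "3.prems"(1)] by simp
  qed
  moreover have "t * \<bar>fst ?l - fst a\<bar> \<le> t * \<bar>fst ?l - fst b\<bar> + t * \<bar>fst b - fst a\<bar>"
    using assms(1) by (simp add: distrib_left[symmetric] mult_left_mono)
  ultimately show ?case using edge by simp
qed auto

lemma passage_time_ge:
  assumes "t \<ge> 0" "\<And>i. \<omega> i \<ge> t" "m \<ge> 0"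
  shows "passage_time \<omega> (0, 0) (int n, m) \<ge> t * real n + real_of_int m"
  unfolding passage_time_def
proof (rule cInf_greatest)
  show "{path_time \<omega> p |p. is_path (0, 0) (int n, m) p} \<noteq> {}"
    using reach_within_column[of \<omega> n m] by (auto simp: reach_within_def)
next
  fix x assume "x \<in> {path_time \<omega> p |p. is_path (0, 0) (int n, m) p}"
  then obtain p where "is_path (0, 0) (int n, m) p" "x = path_time \<omega> p" by auto
  with path_time_ge_displacement[OF assms(1,2), of p] assms(3)
  show "t * real n + real_of_int m \<le> x" by (auto simp: is_path_def)
qed

section \<open>The greedy path\<close>

(* LEAST yields junk if column x has no edge of weight at most s above height y; almost surely
   this never happens (AE_env_column_le). *)
definition climb :: "real \<Rightarrow> (vert \<Rightarrow> real) \<Rightarrow> nat \<Rightarrow> nat \<Rightarrow> nat" where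
  "climb s \<omega> x y = (LEAST k. \<omega> (int x, int (y + k)) \<le> s)"

fun greedy_height :: "real \<Rightarrow> (vert \<Rightarrow> real) \<Rightarrow> nat \<Rightarrow> nat" where
  "greedy_height s \<omega> 0 = 0"
| "greedy_height s \<omega> (Suc x) = greedy_height s \<omega> x + climb s \<omega> x (greedy_height s \<omega> x)"

lemma climb_gt_imp_column_gt:
  "t < climb s \<omega> x y \<Longrightarrow> \<forall>j\<le>t. s < \<omega> (int x, int (y + j))"
  unfolding climb_def by (auto dest: not_less_Least[OF le_less_trans])

lemma greedy_height_cong:
  "(\<And>i. fst i < int x \<Longrightarrow> \<omega> i = \<omega>' i) \<Longrightarrow> greedy_height s \<omega> x = greedy_height s \<omega>' x"
  by (induction x) (simp_all add: climb_def)

lemma reach_within_greedy: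
  assumes "\<forall>x y. \<exists>k. \<omega> (int x, int (y + k)) \<le> s"
  shows "reach_within \<omega> (0, 0) (int n, int (greedy_height s \<omega> n)) (real (greedy_height s \<omega> n) + real n * s)"
proof (induction n)
  case 0
  show ?case by (simp add: reach_within_refl)
next
  case (Suc n)
  let ?y = "greedy_height s \<omega> n" and ?k = "climb s \<omega> n (greedy_height s \<omega> n)"
  have cheap: "\<omega> (int n, int ?y + int ?k) \<le> s"
    using assms LeastI_ex[of "\<lambda>k. \<omega> (int n, int (?y + k)) \<le> s"] by (simp add: climb_def)
  from reach_within_vertical[OF Suc.IH, of "int ?y + int ?k"]
  have "reach_within \<omega> (0, 0) (int n, int ?y + int ?k) (real ?y + real n * s + real ?k)"
    by simp
  from reach_within_right[OF this]
  have "reach_within \<omega> (0, 0) (int (Suc n), int (greedy_height s \<omega> (Suc n)))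
      (real ?y + real n * s + real ?k + \<omega> (int n, int ?y + int ?k))"
    by (simp add: add.commute)
  then show ?case
    by (rule reach_within_mono) (use cheap in \<open>simp add: algebra_simps\<close>)
qed

lemma passage_time_le_greedy:
  assumes "\<And>i. 0 \<le> \<omega> i" "\<forall>x y. \<exists>k. \<omega> (int x, int (y + k)) \<le> s"
  shows "passage_time \<omega> (0, 0) (int n, m) \<le>
    real n * s + m + 2 * max 0 (real (greedy_height s \<omega> n) - m)"
proof -
  let ?R = "greedy_height s \<omega> n"
  have "passage_time \<omega> (0, 0) (int n, m) \<le> real ?R + real n * s + \<bar>m - int ?R\<bar>"
    using reach_within_vertical[OF reach_within_greedy[OF assms(2)], of n m]
    by (intro passage_time_le assms(1)) simp
  also have "\<dots> = real n * s + m + 2 * max 0 (real ?R - m)"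
    by (simp add: abs_if max_def)
  finally show ?thesis .
qed

lemma (in prob_space) ex_of_AE:
  assumes "AE x in M. P x"
  shows "\<exists>x\<in>space M. P x"
proof (rule ccontr)
  assume "\<not> ?thesis"
  with assms have "AE x in M. False"
    by (auto elim: AE_mp intro!: AE_I2)
  then show False by simp
qed

lemma (in prob_space) ex_AE_frequently_mem:
  assumes E: "\<And>n. E n \<in> events" and prob_E: "\<And>n. n \<ge> N \<Longrightarrow> prob (E n) \<ge> \<delta>"
    and "\<delta> > 0" and Q: "AE \<omega> in M. Q \<omega>"
  shows "\<exists>\<omega>\<in>space M. Q \<omega> \<and> (\<exists>\<^sub>F n in sequentially. \<omega> \<in> E n)"
proof (rule ccontr)
  assume contra: "\<not> ?thesis"
  define F where "F k = {\<omega> \<in> space M. \<forall>n\<ge>k. \<omega> \<notin> E n}" for k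
  have F: "F k = space M - (\<Union>n\<in>{k..}. E n)" for k
    by (auto simp: F_def)
  then have F_events: "F k \<in> events" for k
    using E by auto
  have "AE \<omega> in M. \<omega> \<in> (\<Union>k. F k)"
    using Q
  proof (elim AE_mp, intro AE_I2 impI)
    fix \<omega> assume "\<omega> \<in> space M" "Q \<omega>"
    with contra have "\<forall>\<^sub>F n in sequentially. \<omega> \<notin> E n"
      by (simp add: not_frequently)
    then obtain k where "\<forall>n\<ge>k. \<omega> \<notin> E n"
      unfolding eventually_sequentially by blast
    with \<open>\<omega> \<in> space M\<close> show "\<omega> \<in> (\<Union>k. F k)"
      by (auto simp: F_def)
  qed
  then have "prob (\<Union>k. F k) = 1"
    using F_events by (subst (asm) AE_in_set_eq_1) auto
  moreover have "(\<lambda>k. prob (F k)) \<longlonglongrightarrow> prob (\<Union>k. F k)"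
  proof (rule finite_Lim_measure_incseq)
    show "incseq F"
      unfolding incseq_def F_def by auto
  qed (use F_events in auto)
  moreover have "prob (F k) \<le> 1 - \<delta>" if "k \<ge> N" for k
  proof -
    have "prob (F k) \<le> prob (space M - E k)"
      using E by (intro finite_measure_mono) (auto simp: F)
    then show ?thesis
      using prob_compl[OF E] prob_E[OF that] by simp
  qed
  ultimately have "1 \<le> 1 - \<delta>"
    by (intro LIMSEQ_le_const2[of "\<lambda>k. prob (F k)"]) auto
  with \<open>\<delta> > 0\<close> show False by simp
qed

lemma (in prob_space) prob_ge_le_nn_integral:
  assumes [measurable]: "f \<in> borel_measurable M"
    and "c > 0" "b \<ge> 0" "(\<integral>\<^sup>+x. ennreal (f x) \<partial>M) \<le> ennreal b"
  shows "prob {x \<in> space M. c \<le> f x} \<le> b / c"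
proof -
  let ?A = "{x \<in> space M. c \<le> f x}"
  have "ennreal (c * prob ?A) = (\<integral>\<^sup>+x. ennreal c * indicator ?A x \<partial>M)"
    using \<open>c > 0\<close> by (simp add: nn_integral_cmult_indicator emeasure_eq_measure ennreal_mult)
  also have "\<dots> \<le> (\<integral>\<^sup>+x. ennreal (f x) \<partial>M)"
    by (intro nn_integral_mono) (auto simp: ennreal_leI split: split_indicator)
  also have "\<dots> \<le> ennreal b"
    by fact
  finally have "c * prob ?A \<le> b"
    using \<open>b \<ge> 0\<close> by simp
  with \<open>c > 0\<close> show ?thesis
    by (simp add: pos_le_divide_eq mult.commute)
qed

lemma tendsto_le_frequently:
  fixes X b :: "nat \<Rightarrow> real"
  assumes "X \<longlonglongrightarrow> L" "b \<longlonglongrightarrow> B" "\<exists>\<^sub>F n in sequentially. X n \<le> b n"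
  shows "L \<le> B"
proof (rule ccontr)
  assume "\<not> L \<le> B"
  then have "\<forall>\<^sub>F n in sequentially. b n < (L + B) / 2 \<and> (L + B) / 2 < X n"
    using assms(1,2) by (intro eventually_conj order_tendstoD) auto
  then have "\<forall>\<^sub>F n in sequentially. \<not> X n \<le> b n"
    by eventually_elim auto
  with assms(3) show False
    by (simp add: frequently_def)
qed

lemma LIMSEQ_ceiling_mult_divide: "(\<lambda>n. real_of_int \<lceil>v * real n\<rceil> / real n) \<longlonglongrightarrow> v"
proof (rule tendsto_sandwich[of "\<lambda>n. v" _ _ "\<lambda>n. v + 1 / real n"])
  have "\<forall>\<^sub>F n in sequentially.
      v \<le> real_of_int \<lceil>v * real n\<rceil> / real n \<and> real_of_int \<lceil>v * real n\<rceil> / real n \<le> v + 1 / real n"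
    using eventually_gt_at_top[of 0]
  proof eventually_elim
    case (elim n)
    then show ?case by (simp add: field_simps) linarith
  qed
  then show "\<forall>\<^sub>F n in sequentially. v \<le> real_of_int \<lceil>v * real n\<rceil> / real n"
    "\<forall>\<^sub>F n in sequentially. real_of_int \<lceil>v * real n\<rceil> / real n \<le> v + 1 / real n"
    by (simp_all add: eventually_conj_iff)
  show "(\<lambda>n. v + 1 / real n) \<longlonglongrightarrow> v"
    using tendsto_add[OF tendsto_const lim_inverse_n', of v] by simp
qed simp

lemma tendsto_diff_id_at_top:
  fixes \<Lambda> :: "real \<Rightarrow> real"
  assumes "\<And>v. 0 \<le> v \<Longrightarrow> t + v \<le> \<Lambda> v"
    and "\<And>s. t < s \<Longrightarrow> \<forall>\<^sub>F v in at_top. \<Lambda> v \<le> s + v"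
  shows "((\<lambda>v. \<Lambda> v - v - t) \<longlongrightarrow> 0) at_top"
proof -
  have "((\<lambda>v. \<Lambda> v - v) \<longlongrightarrow> t) at_top"
  proof (rule order_tendstoI)
    fix a assume "a < t"
    show "\<forall>\<^sub>F v in at_top. a < \<Lambda> v - v"
      using eventually_ge_at_top[of 0]
    proof eventually_elim
      case (elim v)
      with assms(1)[of v] \<open>a < t\<close> show ?case by simp
    qed
  next
    fix a assume "t < a"
    then have "\<forall>\<^sub>F v in at_top. \<Lambda> v \<le> (t + a) / 2 + v"
      by (intro assms(2)) simp
    then show "\<forall>\<^sub>F v in at_top. \<Lambda> v - v < a"
    proof eventually_elim
      case (elim v)
      with \<open>t < a\<close> show ?case by (simp add: field_simps)
    qed
  qed
  then show ?thesis
    by (rule LIM_zero)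
qed

lemma one_minus_divide_antimono:
  fixes p q :: real
  assumes "0 < p" "p \<le> q"
  shows "(1 - q) / q \<le> (1 - p) / p"
  using assms by (simp add: diff_divide_distrib frac_le)

section \<open>Distributions and the product environment\<close>

definition support_inf :: "real measure \<Rightarrow> real" where
  "support_inf M = Inf {x. 0 < cdf M x}"

context real_distribution
begin

lemma cdf_pos_nonempty: "{x. 0 < cdf M x} \<noteq> {}"
proof -
  have "\<forall>\<^sub>F x in at_top. 1 / 2 < cdf M x"
    using cdf_lim_at_top_prob by (rule order_tendstoD) simp
  then obtain N where "\<forall>x\<ge>N. 1 / 2 < cdf M x"
    by (auto simp: eventually_at_top_linorder)
  then have "0 < cdf M N"
    by fastforce
  then show ?thesis
    by blast
qed

lemma cdf_pos_of_support_inf_less: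
  assumes "bdd_below {x. 0 < cdf M x}" "support_inf M < x"
  shows "0 < cdf M x"
proof -
  obtain y where "0 < cdf M y" "y < x"
    using assms cInf_less_iff[OF cdf_pos_nonempty] by (auto simp: support_inf_def)
  then show ?thesis
    using cdf_nondecreasing[of y x] by simp
qed

lemma measure_lessThan_support_inf:
  assumes "bdd_below {x. 0 < cdf M x}"
  shows "measure M {..<support_inf M} = 0"
proof -
  let ?t = "support_inf M"
  have "cdf M x = 0" if "x < ?t" for x
  proof -
    have "\<not> 0 < cdf M x"
      using that assms cInf_lower[of x] by (force simp: support_inf_def)
    then show ?thesis
      using cdf_nonneg[of x] by simp
  qed
  then have "\<forall>\<^sub>F x in at_left ?t. cdf M x = 0"
    using eventually_at_left_real[of "?t - 1" ?t] by (auto elim: eventually_mono)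
  then have "(cdf M \<longlongrightarrow> 0) (at_left ?t)"
    by (rule tendsto_eventually)
  with cdf_at_left show ?thesis
    by (rule tendsto_unique[rotated]) simp
qed

lemma nonneg_of_cdf_pos:
  assumes "measure M {..<0} = 0" "0 < cdf M x"
  shows "0 \<le> x"
proof (rule ccontr)
  assume "\<not> 0 \<le> x"
  then have "cdf M x \<le> measure M {..<0}"
    unfolding cdf_def2 by (intro finite_measure_mono) auto
  with assms show False by simp
qed

lemma bdd_below_cdf_pos: "measure M {..<0} = 0 \<Longrightarrow> bdd_below {x. 0 < cdf M x}"
  by (rule bdd_belowI[of _ 0]) (auto intro: nonneg_of_cdf_pos)

lemma support_inf_nonneg: "measure M {..<0} = 0 \<Longrightarrow> 0 \<le> support_inf M"
  unfolding support_inf_def by (rule cInf_greatest[OF cdf_pos_nonempty]) (auto intro: nonneg_of_cdf_pos)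

lemma cdf_eq_measure_atLeastAtMost:
  assumes "measure M {..<0} = 0"
  shows "cdf M x = measure M {0..x}"
proof (cases "0 \<le> x")
  case True
  then have "{..x} = {..<0} \<union> {0..x}"
    by auto
  moreover have "{..<0} \<inter> {0..x} = {}"
    by auto
  ultimately show ?thesis
    using finite_measure_Union[of "{..<0}" "{0..x}"] assms by (simp add: cdf_def2)
next
  case False
  then have "cdf M x \<le> measure M {..<0}"
    unfolding cdf_def2 by (intro finite_measure_mono) auto
  with False assms cdf_nonneg[of x] show ?thesis
    by simp
qed

lemma prob_space_env: "prob_space (env M)"
  unfolding env_def by (rule prob_space_PiM) (simp add: prob_space_axioms)

interpretation E: prob_space "env M"
  by (rule prob_space_env)

lemma space_env: "space (env M) = UNIV"
  by (simp add: env_def space_PiM)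

lemma measurable_env_component: "(\<lambda>\<omega>. \<omega> i) \<in> measurable (env M) M"
  unfolding env_def by (rule measurable_component_singleton) simp

lemma measurable_env_coordinate [measurable]: "(\<lambda>\<omega>. \<omega> i) \<in> borel_measurable (env M)"
  using measurable_env_component measurable_cong_sets[OF refl events_eq_borel] by blast

lemma indep_vars_env: "E.indep_vars (\<lambda>_. M) (\<lambda>i \<omega>. \<omega> i) UNIV"
proof (subst E.indep_vars_iff_distr_eq_PiM)
  have "(\<Pi>\<^sub>M i\<in>UNIV. distr (env M) M (\<lambda>\<omega>. \<omega> i)) = env M"
    unfolding env_def
    by (rule PiM_cong) (auto intro!: distr_PiM_component simp: prob_space_axioms)
  then show "distr (env M) (\<Pi>\<^sub>M i\<in>UNIV. M) (\<lambda>\<omega>. \<lambda>i\<in>UNIV. \<omega> i) = (\<Pi>\<^sub>M i\<in>UNIV. distr (env M) M (\<lambda>\<omega>. \<omega> i))"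
    by (simp add: env_def restrict_UNIV)
qed (simp_all add: measurable_env_component)

lemma emeasure_env_conj_indep:
  assumes P: "\<And>\<omega> \<omega>'. (\<And>i. i \<in> A \<Longrightarrow> \<omega> i = \<omega>' i) \<Longrightarrow> P \<omega> = P \<omega>'"
    and Q: "\<And>\<omega> \<omega>'. (\<And>i. i \<in> B \<Longrightarrow> \<omega> i = \<omega>' i) \<Longrightarrow> Q \<omega> = Q \<omega>'"
    and "A \<inter> B = {}"
    and P_sets: "{\<omega> \<in> space (env M). P \<omega>} \<in> sets (env M)"
    and Q_sets: "{\<omega> \<in> space (env M). Q \<omega>} \<in> sets (env M)"
  shows "emeasure (env M) {\<omega> \<in> space (env M). P \<omega> \<and> Q \<omega>} =
    emeasure (env M) {\<omega> \<in> space (env M). P \<omega>} * emeasure (env M) {\<omega> \<in> space (env M). Q \<omega>}"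
proof -
  define extend :: "vert set \<Rightarrow> (vert \<Rightarrow> real) \<Rightarrow> vert \<Rightarrow> real"
    where "extend C \<xi> i = (if i \<in> C then \<xi> i else 0)" for C \<xi> i
  have extend_measurable: "extend C \<in> measurable (PiM C (\<lambda>_. M)) (env M)" for C
    unfolding env_def extend_def
  proof (rule measurable_PiM_single')
    show "(\<lambda>\<omega>. if i \<in> C then \<omega> i else 0) \<in> PiM C (\<lambda>_. M) \<rightarrow>\<^sub>M M" for i
      by (cases "i \<in> C") (simp_all add: measurable_component_singleton)
  qed (simp add: PiE_iff)
  have P_extend: "P (extend A (restrict \<omega> A)) = P \<omega>" for \<omega>
    by (rule P) (simp add: extend_def)
  have Q_extend: "Q (extend B (restrict \<omega> B)) = Q \<omega>" for \<omega>
    by (rule Q) (simp add: extend_def)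
  have "E.indep_var (PiM A (\<lambda>_. M)) (\<lambda>\<omega>. restrict \<omega> A) (PiM B (\<lambda>_. M)) (\<lambda>\<omega>. restrict \<omega> B)"
    using E.indep_var_restrict[OF indep_vars_env \<open>A \<inter> B = {}\<close>] by simp
  from E.indep_varD[OF this measurable_sets[OF extend_measurable P_sets] measurable_sets[OF extend_measurable Q_sets]]
  have "E.prob {\<omega>. P \<omega> \<and> Q \<omega>} = E.prob {\<omega>. P \<omega>} * E.prob {\<omega>. Q \<omega>}"
    by (simp add: vimage_def space_PiM space_env P_extend Q_extend)
  then show ?thesis
    by (simp add: E.emeasure_eq_measure ennreal_mult space_env)
qed

lemma emeasure_env_cylinder:
  assumes "finite J" "\<And>i. i \<in> J \<Longrightarrow> X i \<in> sets M"
  shows "emeasure (env M) {\<omega> \<in> space (env M). \<forall>i\<in>J. \<omega> i \<in> X i} = (\<Prod>i\<in>J. emeasure M (X i))"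
proof -
  have "{\<omega> \<in> space (env M). \<forall>i\<in>J. \<omega> i \<in> X i} = prod_emb UNIV (\<lambda>_. M) J (Pi\<^sub>E J X)"
    by (auto simp: prod_emb_def space_PiM env_def PiE_iff)
  then show ?thesis
    using emeasure_PiM_emb[of UNIV "\<lambda>_. M" J X] assms by (simp add: env_def prob_space_axioms)
qed

lemma emeasure_env_column_gt:
  "emeasure (env M) {\<omega> \<in> space (env M). \<forall>j\<le>t. s < \<omega> (int x, int (y + j))} =
    ennreal ((1 - cdf M s) ^ Suc t)"
proof -
  let ?J = "(\<lambda>j. (int x, int (y + j))) ` {..t}"
  have "inj_on (\<lambda>j. (int x, int (y + j))) {..t}"
    by (auto simp: inj_on_def)
  then have "card ?J = Suc t"
    by (simp add: card_image)
  have "emeasure M {s<..} = ennreal (1 - cdf M s)"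
    using prob_compl[of "{..s}"] by (simp add: emeasure_eq_measure cdf_def2 Compl_eq_Diff_UNIV[symmetric])
  have "{\<omega> \<in> space (env M). \<forall>j\<le>t. s < \<omega> (int x, int (y + j))} = {\<omega> \<in> space (env M). \<forall>i\<in>?J. \<omega> i \<in> {s<..}}"
    by auto
  also have "emeasure (env M) \<dots> = (\<Prod>i\<in>?J. emeasure M {s<..})"
    by (rule emeasure_env_cylinder) auto
  also have "\<dots> = emeasure M {s<..} ^ card ?J"
    by simp
  finally show ?thesis
    using \<open>card ?J = Suc t\<close> \<open>emeasure M {s<..} = _\<close> cdf_bounded_prob[of s]
    by (simp add: ennreal_power)
qed

lemma AE_env_ge:
  assumes "measure M {..<a} = 0"
  shows "AE \<omega> in env M. \<forall>i. a \<le> \<omega> i"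
proof (subst AE_all_countable, intro allI)
  fix i :: vert
  have "AE x in M. a \<le> x"
    using assms by (intro AE_I'[of "{..<a}"]) (auto simp: null_sets_def emeasure_eq_measure)
  then show "AE \<omega> in env M. a \<le> \<omega> i"
    unfolding env_def using AE_PiM_component[of UNIV "\<lambda>_. M" i "\<lambda>x. a \<le> x"] prob_space_axioms
    by simp
qed

lemma AE_env_column_le:
  assumes "0 < cdf M s"
  shows "AE \<omega> in env M. \<forall>x y. \<exists>k. \<omega> (int x, int (y + k)) \<le> s"
proof (subst AE_all_countable, intro allI, subst AE_all_countable, intro allI)
  fix x y :: nat
  define B where "B = {\<omega> \<in> space (env M). \<forall>k. s < \<omega> (int x, int (y + k))}"
  have "E.prob B \<le> (1 - cdf M s) ^ Suc t" for t
  proof -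
    have "B \<subseteq> {\<omega> \<in> space (env M). \<forall>j\<le>t. s < \<omega> (int x, int (y + j))}"
      by (auto simp: B_def)
    then have "emeasure (env M) B \<le> emeasure (env M) {\<omega> \<in> space (env M). \<forall>j\<le>t. s < \<omega> (int x, int (y + j))}"
      by (rule emeasure_mono) measurable
    also have "\<dots> = ennreal ((1 - cdf M s) ^ Suc t)"
      by (rule emeasure_env_column_gt)
    finally show ?thesis
      using cdf_bounded_prob[of s] by (simp add: E.emeasure_eq_measure)
  qed
  moreover have "(\<lambda>t. (1 - cdf M s) ^ Suc t) \<longlonglongrightarrow> 0"
    using assms cdf_bounded_prob[of s] by (intro LIMSEQ_Suc LIMSEQ_power_zero) simp
  ultimately have "E.prob B \<le> 0"
    by (intro LIMSEQ_le_const) auto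
  moreover have "B \<in> sets (env M)"
    unfolding B_def by measurable
  ultimately have "B \<in> null_sets (env M)"
    by (simp add: null_sets_def E.emeasure_eq_measure measure_le_0_iff)
  then show "AE \<omega> in env M. \<exists>k. \<omega> (int x, int (y + k)) \<le> s"
    by (rule AE_I') (auto simp: B_def not_le)
qed

lemma measurable_climb [measurable]: "(\<lambda>\<omega>. climb s \<omega> x y) \<in> measurable (env M) (count_space UNIV)"
  unfolding climb_def by measurable

lemma measurable_greedy_height [measurable]:
  "(\<lambda>\<omega>. greedy_height s \<omega> x) \<in> measurable (env M) (count_space UNIV)"
proof (induction x)
  case (Suc x)
  then have "(\<lambda>\<omega>. climb s \<omega> x (greedy_height s \<omega> x)) \<in> measurable (env M) (count_space UNIV)"
    by (rule measurable_compose_countable[OF measurable_climb])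
  with Suc show ?case by simp
qed simp

lemma emeasure_climb_greedy_gt:
  "emeasure (env M) {\<omega> \<in> space (env M). t < climb s \<omega> x (greedy_height s \<omega> x)} \<le>
    ennreal ((1 - cdf M s) ^ Suc t)"
proof -
  let ?c = "ennreal ((1 - cdf M s) ^ Suc t)"
  define R where "R y = {\<omega> \<in> space (env M). greedy_height s \<omega> x = y}" for y
  define W where "W y = {\<omega> \<in> space (env M). greedy_height s \<omega> x = y \<and> (\<forall>j\<le>t. s < \<omega> (int x, int (y + j)))}" for y
  have [measurable]: "R y \<in> sets (env M)" "W y \<in> sets (env M)" for y
    unfolding R_def W_def by measurable
  have "{\<omega> \<in> space (env M). t < climb s \<omega> x (greedy_height s \<omega> x)} \<subseteq> (\<Union>y. W y)"
    by (auto simp: W_def space_env dest: climb_gt_imp_column_gt)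
  then have "emeasure (env M) {\<omega> \<in> space (env M). t < climb s \<omega> x (greedy_height s \<omega> x)} \<le> emeasure (env M) (\<Union>y. W y)"
    by (rule emeasure_mono) measurable
  also have "\<dots> \<le> (\<Sum>y. emeasure (env M) (W y))"
    by (rule emeasure_subadditive_countably) auto
  \<comment> \<open>the height reached at column x only depends on the columns to its left\<close>
  also have "\<dots> = (\<Sum>y. emeasure (env M) (R y) * ?c)"
  proof (intro suminf_cong)
    fix y
    have "emeasure (env M) (W y) = emeasure (env M) (R y) *
        emeasure (env M) {\<omega> \<in> space (env M). \<forall>j\<le>t. s < \<omega> (int x, int (y + j))}"
      unfolding W_def R_def
      by (rule emeasure_env_conj_indep[where A = "{i. fst i < int x}" and B = "{i. fst i = int x}"])
        (auto intro: greedy_height_cong)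
    then show "emeasure (env M) (W y) = emeasure (env M) (R y) * ?c"
      by (simp only: emeasure_env_column_gt)
  qed
  also have "\<dots> = emeasure (env M) (\<Union>y. R y) * ?c"
    unfolding ennreal_suminf_multc
    by (subst suminf_emeasure) (auto simp: disjoint_family_on_def R_def)
  also have "\<dots> \<le> ?c"
    using mult_right_mono[OF E.emeasure_le_1[of "\<Union>y. R y"], of ?c] by simp
  finally show ?thesis .
qed

lemma nn_integral_climb_greedy_le:
  assumes "0 < cdf M s"
  shows "(\<integral>\<^sup>+\<omega>. of_nat (climb s \<omega> x (greedy_height s \<omega> x)) \<partial>env M) \<le>
    ennreal ((1 - cdf M s) / cdf M s)"
proof -
  let ?q = "cdf M s"
  have "(\<lambda>t. (1 - ?q) ^ t) sums (1 / (1 - (1 - ?q)))"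
    using assms cdf_bounded_prob[of s] by (intro geometric_sums) auto
  from sums_mult[OF this, of "1 - ?q"] have sums: "(\<lambda>t. (1 - ?q) ^ Suc t) sums ((1 - ?q) / ?q)"
    by simp
  have "(\<integral>\<^sup>+\<omega>. of_nat (climb s \<omega> x (greedy_height s \<omega> x)) \<partial>env M) =
      (\<Sum>t. emeasure (env M) {\<omega> \<in> space (env M). t < climb s \<omega> x (greedy_height s \<omega> x)})"
    by (rule nn_integral_nat_function) measurable
  also have "\<dots> \<le> (\<Sum>t. ennreal ((1 - ?q) ^ Suc t))"
    by (intro suminf_le emeasure_climb_greedy_gt summableI)
  also have "\<dots> = ennreal ((1 - ?q) / ?q)"
    using sums cdf_bounded_prob[of s] by (simp add: suminf_ennreal2 sums_iff)
  finally show ?thesis .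
qed

lemma nn_integral_greedy_height_le:
  assumes "0 < cdf M s"
  shows "(\<integral>\<^sup>+\<omega>. of_nat (greedy_height s \<omega> n) \<partial>env M) \<le>
    of_nat n * ennreal ((1 - cdf M s) / cdf M s)"
proof (induction n)
  case (Suc n)
  have "(\<integral>\<^sup>+\<omega>. of_nat (greedy_height s \<omega> (Suc n)) \<partial>env M) =
      (\<integral>\<^sup>+\<omega>. of_nat (greedy_height s \<omega> n) \<partial>env M) +
      (\<integral>\<^sup>+\<omega>. of_nat (climb s \<omega> n (greedy_height s \<omega> n)) \<partial>env M)"
    by (simp add: nn_integral_add)
  also have "\<dots> \<le> of_nat (Suc n) * ennreal ((1 - cdf M s) / cdf M s)"
    using add_mono[OF Suc.IH nn_integral_climb_greedy_le[OF assms]] by (simp add: algebra_simps)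
  finally show ?case .
qed simp

lemma prob_greedy_height_ge:
  assumes "0 < cdf M s" "0 < n" "0 < c"
  shows "E.prob {\<omega> \<in> space (env M). c * real n \<le> real (greedy_height s \<omega> n)} \<le>
    ((1 - cdf M s) / cdf M s) / c"
proof -
  define \<mu> where "\<mu> = (1 - cdf M s) / cdf M s"
  have "\<mu> \<ge> 0"
    using assms(1) cdf_bounded_prob[of s] by (simp add: \<mu>_def)
  have "(\<lambda>\<omega>. real (greedy_height s \<omega> n)) \<in> borel_measurable (env M)"
    by (rule measurable_compose[OF measurable_greedy_height]) simp
  moreover have "(\<integral>\<^sup>+\<omega>. ennreal (real (greedy_height s \<omega> n)) \<partial>env M) \<le> ennreal (real n * \<mu>)"
    using nn_integral_greedy_height_le[OF assms(1), of n] \<open>\<mu> \<ge> 0\<close>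
    by (simp add: ennreal_of_nat_eq_real_of_nat ennreal_mult \<mu>_def[symmetric])
  ultimately have "E.prob {\<omega> \<in> space (env M). c * real n \<le> real (greedy_height s \<omega> n)} \<le> real n * \<mu> / (c * real n)"
    using assms(2,3) \<open>\<mu> \<ge> 0\<close> by (intro E.prob_ge_le_nn_integral) auto
  with assms(2) show ?thesis
    by (simp add: \<mu>_def)
qed

section \<open>Bounds on the time constant\<close>

lemma limit_passage_time_ge:
  assumes "0 \<le> t" "measure M {..<t} = 0" "0 \<le> v"
    and "AE \<omega> in env M. (\<lambda>n. passage_time \<omega> (0, 0) (int n, \<lceil>v * real n\<rceil>) / real n) \<longlonglongrightarrow> L"
  shows "t + v \<le> L"
proof -
  obtain \<omega> where "\<forall>i. t \<le> \<omega> i"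
    and lim: "(\<lambda>n. passage_time \<omega> (0, 0) (int n, \<lceil>v * real n\<rceil>) / real n) \<longlonglongrightarrow> L"
    using E.ex_of_AE[OF AE_conjI[OF AE_env_ge[OF assms(2)] assms(4)]] by blast
  have "t + v \<le> passage_time \<omega> (0, 0) (int n, \<lceil>v * real n\<rceil>) / real n" if "n \<ge> 1" for n
  proof -
    have "0 \<le> v * real n"
      using assms(3) by simp
    have "(t + v) * real n \<le> t * real n + real_of_int \<lceil>v * real n\<rceil>"
      by (simp add: algebra_simps)
    also have "\<dots> \<le> passage_time \<omega> (0, 0) (int n, \<lceil>v * real n\<rceil>)"
      using assms(1) \<open>0 \<le> v * real n\<close> \<open>\<forall>i. t \<le> \<omega> i\<close> by (intro passage_time_ge) auto
    finally show ?thesis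
      using that by (simp add: pos_le_divide_eq)
  qed
  then show ?thesis
    by (intro LIMSEQ_le_const[OF lim]) auto
qed

lemma limit_passage_time_le_slack:
  assumes nonneg: "measure M {..<0} = 0" and "0 \<le> v" and "0 < cdf M s"
    and "(1 - cdf M s) / cdf M s < c"
    and lim_AE: "AE \<omega> in env M. (\<lambda>n. passage_time \<omega> (0, 0) (int n, \<lceil>v * real n\<rceil>) / real n) \<longlonglongrightarrow> L"
  shows "L \<le> s + v + 2 * max 0 (c - v)"
proof -
  define \<mu> where "\<mu> = (1 - cdf M s) / cdf M s"
  have "0 \<le> \<mu>"
    using \<open>0 < cdf M s\<close> cdf_bounded_prob[of s] by (simp add: \<mu>_def)
  moreover have "\<mu> < c"
    using assms(4) by (simp add: \<mu>_def)
  ultimately have "0 < c" "0 < 1 - \<mu> / c"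
    by simp_all
  define E where "E n = {\<omega> \<in> space (env M). real (greedy_height s \<omega> n) < c * real n}" for n
  have E_events: "E n \<in> sets (env M)" for n
    unfolding E_def by measurable
  have prob_E: "1 - \<mu> / c \<le> E.prob (E n)" if "n \<ge> 1" for n
  proof -
    have "space (env M) - E n = {\<omega> \<in> space (env M). c * real n \<le> real (greedy_height s \<omega> n)}"
      by (auto simp: E_def)
    then have "E.prob (space (env M) - E n) \<le> \<mu> / c"
      using prob_greedy_height_ge[OF \<open>0 < cdf M s\<close> _ \<open>0 < c\<close>, of n] that by (simp add: \<mu>_def)
    then show ?thesis
      using E.prob_compl[OF E_events] by simp
  qed
  have "AE \<omega> in env M. (\<forall>i. 0 \<le> \<omega> i) \<and> (\<forall>x y. \<exists>k. \<omega> (int x, int (y + k)) \<le> s) \<and>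
      (\<lambda>n. passage_time \<omega> (0, 0) (int n, \<lceil>v * real n\<rceil>) / real n) \<longlonglongrightarrow> L"
    using AE_env_ge[OF nonneg] AE_env_column_le[OF \<open>0 < cdf M s\<close>] lim_AE by eventually_elim auto
  from E.ex_AE_frequently_mem[where N = 1 and E = E, OF E_events prob_E \<open>0 < 1 - \<mu> / c\<close> this]
  obtain \<omega> where nonneg_\<omega>: "\<forall>i. 0 \<le> \<omega> i"
    and columns: "\<forall>x y. \<exists>k. \<omega> (int x, int (y + k)) \<le> s"
    and lim: "(\<lambda>n. passage_time \<omega> (0, 0) (int n, \<lceil>v * real n\<rceil>) / real n) \<longlonglongrightarrow> L"
    and often: "\<exists>\<^sub>F n in sequentially. \<omega> \<in> E n"
    by auto
  define b where "b n = s + real_of_int \<lceil>v * real n\<rceil> / real n + 2 * max 0 (c - v)" for n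
  have "\<exists>\<^sub>F n in sequentially. passage_time \<omega> (0, 0) (int n, \<lceil>v * real n\<rceil>) / real n \<le> b n"
    using frequently_eventually_conj[OF often eventually_gt_at_top[of 0]]
  proof (rule frequently_elim1)
    fix n assume n: "0 < n \<and> \<omega> \<in> E n"
    let ?m = "\<lceil>v * real n\<rceil>"
    have "real (greedy_height s \<omega> n) - ?m \<le> real n * (c - v)"
      using n by (auto simp: E_def algebra_simps) linarith
    moreover have "real n * (c - v) \<le> real n * max 0 (c - v)"
      by (intro mult_left_mono) auto
    ultimately have "max 0 (real (greedy_height s \<omega> n) - ?m) \<le> real n * max 0 (c - v)"
      by simp
    have "passage_time \<omega> (0, 0) (int n, ?m) \<le>
        real n * s + ?m + 2 * max 0 (real (greedy_height s \<omega> n) - ?m)"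
      using nonneg_\<omega> columns by (intro passage_time_le_greedy) auto
    also have "\<dots> \<le> real n * s + ?m + 2 * (real n * max 0 (c - v))"
      using \<open>max 0 _ \<le> _\<close> by simp
    also have "\<dots> = real n * b n"
      using n by (simp add: b_def field_simps)
    finally have "passage_time \<omega> (0, 0) (int n, ?m) \<le> real n * b n" .
    with n show "passage_time \<omega> (0, 0) (int n, ?m) / real n \<le> b n"
      by (simp add: pos_divide_le_eq mult.commute)
  qed
  moreover have "b \<longlonglongrightarrow> s + v + 2 * max 0 (c - v)"
    unfolding b_def by (intro tendsto_intros LIMSEQ_ceiling_mult_divide)
  ultimately show ?thesis
    using tendsto_le_frequently[OF lim] by blast
qed

lemma limit_passage_time_le:
  assumes "measure M {..<0} = 0" "0 \<le> v" "0 < cdf M s" "(1 - cdf M s) / cdf M s \<le> v"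
    and "AE \<omega> in env M. (\<lambda>n. passage_time \<omega> (0, 0) (int n, \<lceil>v * real n\<rceil>) / real n) \<longlonglongrightarrow> L"
  shows "L \<le> s + v"
proof (rule field_le_epsilon)
  fix e :: real assume "0 < e"
  with assms have "L \<le> s + v + 2 * max 0 (v + e / 2 - v)"
    by (intro limit_passage_time_le_slack) auto
  with \<open>0 < e\<close> show "L \<le> s + v + e"
    by simp
qed


lemma time_constant_tendsto:
  assumes nonneg: "measure M {..<0} = 0"
    and \<Lambda>: "\<And>v. v \<ge> 0 \<Longrightarrow> AE \<omega> in env M.
          (\<lambda>n. passage_time \<omega> (0, 0) (int n, \<lceil>v * real n\<rceil>) / real n) \<longlonglongrightarrow> \<Lambda> v"
  shows "((\<lambda>v. \<Lambda> v - v - support_inf M) \<longlongrightarrow> 0) at_top"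
proof (rule tendsto_diff_id_at_top)
  show "support_inf M + v \<le> \<Lambda> v" if "0 \<le> v" for v
    using that nonneg bdd_below_cdf_pos[OF nonneg]
    by (intro limit_passage_time_ge support_inf_nonneg measure_lessThan_support_inf \<Lambda>)
next
  fix s assume "support_inf M < s"
  with bdd_below_cdf_pos[OF nonneg] have "0 < cdf M s"
    by (rule cdf_pos_of_support_inf_less)
  show "\<forall>\<^sub>F v in at_top. \<Lambda> v \<le> s + v"
    using eventually_ge_at_top[of "max 0 ((1 - cdf M s) / cdf M s)"]
  proof eventually_elim
    case (elim v)
    with \<open>0 < cdf M s\<close> nonneg show ?case
      by (intro limit_passage_time_le \<Lambda>) auto
  qed
qed

lemma time_constant_eq_of_atom:
  assumes nonneg: "measure M {..<0} = 0"
    and \<Lambda>: "\<And>v. v \<ge> 0 \<Longrightarrow> AE \<omega> in env M.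
          (\<lambda>n. passage_time \<omega> (0, 0) (int n, \<lceil>v * real n\<rceil>) / real n) \<longlonglongrightarrow> \<Lambda> v"
    and p: "0 < measure M {support_inf M}"
    and v: "(1 - measure M {support_inf M}) / measure M {support_inf M} \<le> v"
  shows "\<Lambda> v = v + support_inf M"
proof -
  let ?t = "support_inf M"
  have "measure M {?t} \<le> cdf M ?t"
    unfolding cdf_def2 by (intro finite_measure_mono) auto
  with p have "0 < cdf M ?t"
    by linarith
  have "(1 - cdf M ?t) / cdf M ?t \<le> v"
    using one_minus_divide_antimono[OF p \<open>measure M {?t} \<le> cdf M ?t\<close>] v by linarith
  moreover have "0 \<le> (1 - measure M {?t}) / measure M {?t}"
    using p prob_le_1[of "{?t}"] by simp
  with v have "0 \<le> v"
    by linarith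
  ultimately have "\<Lambda> v \<le> ?t + v"
    using \<open>0 < cdf M ?t\<close> nonneg by (intro limit_passage_time_le \<Lambda>)
  moreover have "?t + v \<le> \<Lambda> v"
    using \<open>0 \<le> v\<close> nonneg bdd_below_cdf_pos[OF nonneg]
    by (intro limit_passage_time_ge support_inf_nonneg measure_lessThan_support_inf \<Lambda>)
  ultimately show ?thesis
    by linarith
qed

end

theorem proposition3p12:
  fixes G :: "real measure" and \<Lambda> :: "real \<Rightarrow> real"
  assumes "prob_space G"
    and "sets G = sets borel"
    and "measure G {..<0} = 0"
    and \<Lambda>: "\<And>v. v \<ge> 0 \<Longrightarrow> AE \<omega> in env G.
          (\<lambda>n. passage_time \<omega> (0, 0) (int n, \<lceil>v * real n\<rceil>) / real n) \<longlonglongrightarrow> \<Lambda> v"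
  defines "t0 \<equiv> Inf {x. measure G {0..x} > 0}"
  shows "((\<lambda>v. \<Lambda> v - v - t0) \<longlongrightarrow> 0) at_top \<and>
         (measure G {t0} > 0 \<longrightarrow>
           (\<forall>v \<ge> (1 - measure G {t0}) / measure G {t0}. \<Lambda> v = v + t0))"
proof -
  interpret real_distribution G
    using assms(1,2) by (intro real_distribution.intro real_distribution_axioms.intro)
  have "t0 = support_inf G"
    using cdf_eq_measure_atLeastAtMost[OF assms(3)] by (simp add: t0_def support_inf_def)
  then show ?thesis
    using time_constant_tendsto[OF assms(3) \<Lambda>] time_constant_eq_of_atom[OF assms(3) \<Lambda>] by simp
qed

end
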